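(* Let $\mathbb{F}$ be an algebraically closed field and let $A,A^*$ be a pair of $2\times2$ matrices over $\mathbb{F}$, each tridiagonal with both diagonal entries $0$ and nonzero off-diagonal entries, which is a Leonard pair in $\mathrm{Mat}_2(\mathbb{F})$. Then there exist nonzero $\xi,\xi^*\in\mathbb{F}$, a nonzero $s\in\mathbb{F}$ with $s^2\neq1$, and an invertible diagonal matrix $D\in\mathrm{Mat}_2(\mathbb{F})$ such that $D^{-1}(\xi A)D=\begin{pmatrix}0&1\\1&0\end{pmatrix}$ and $D^{-1}(\xi^*A^* )D=\begin{pmatrix}0&s^{-1}\\ s&0\end{pmatrix}$.
   Context: A Leonard pair in $\mathrm{Mat}_{d+1}(\mathbb{F})$ is a pair of matrices $A,A^*$ such that there is a basis of $\mathbb{F}^{d+1}$ in which $A$ is irreducible tridiagonal (tridiagonal with all sub/superdiagonal entries nonzero) and $A^*$ is diagonal, and a basis in which $A^*$ is irreducible tridiagonal and $A$ is diagonal. (In the paper's terminology, the conclusion says that after replacing $A,A^*$ by nonzero scalar multiples, the pair is equivalent, via conjugation by an invertible diagonal matrix, to the Leonard pair $\begin{pmatrix}0&1\\1&0\end{pmatrix},\begin{pmatrix}0&s^{-1}\\ s&0\end{pmatrix}$ with $s\ne0$, $s^2\ne1$.) *)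

theory Defs
  imports "HOL-Computational_Algebra.Polynomial" "Jordan_Normal_Form.Matrix"
begin

definition irred_tridiagonal :: "'a::zero mat \<Rightarrow> bool" where
  "irred_tridiagonal B \<longleftrightarrow> square_mat B \<and>
     (\<forall>i<dim_row B. \<forall>j<dim_col B. Suc i < j \<or> Suc j < i \<longrightarrow> B $$ (i,j) = 0) \<and>
     (\<forall>i. Suc i < dim_row B \<longrightarrow> B $$ (i, Suc i) \<noteq> 0 \<and> B $$ (Suc i, i) \<noteq> 0)"

text \<open>Leonard pair in Mat_n(F) (n = d+1): there is a basis of F^n (the columns of an
  invertible P) in which A is irreducible tridiagonal and A* is diagonal, and a
  basis (columns of Q) in which A* is irreducible tridiagonal and A is diagonal.\<close>
definition leonard_pair :: "nat \<Rightarrow> 'a::field mat \<Rightarrow> 'a mat \<Rightarrow> bool" where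
  "leonard_pair n A As \<longleftrightarrow> n \<ge> 1 \<and> A \<in> carrier_mat n n \<and> As \<in> carrier_mat n n \<and>
     (\<exists>P Pi. P \<in> carrier_mat n n \<and> Pi \<in> carrier_mat n n \<and> inverts_mat P Pi \<and> inverts_mat Pi P \<and>
        irred_tridiagonal (Pi * A * P) \<and> diagonal_mat (Pi * As * P)) \<and>
     (\<exists>Q Qi. Q \<in> carrier_mat n n \<and> Qi \<in> carrier_mat n n \<and> inverts_mat Q Qi \<and> inverts_mat Qi Q \<and>
        irred_tridiagonal (Qi * As * Q) \<and> diagonal_mat (Qi * A * Q))"

end

theory Submission
  imports Defs
begin

text \<open>Write \<open>A = [[0,a],[b,0]]\<close> and \<open>A* = [[0,c],[d,0]]\<close>. Conjugating by \<open>diag(1,t)\<close>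
  turns \<open>[[0,x],[y,0]]\<close> into \<open>[[0,xt],[y/t,0]]\<close>, so after scaling \<open>A\<close> by a square root
  \<open>\<xi>\<close> of \<open>1/(ab)\<close> and \<open>A*\<close> by a square root \<open>\<xi>*\<close> of \<open>1/(cd)\<close>, a suitable \<open>t\<close> brings
  \<open>\<xi>A\<close> to \<open>[[0,1],[1,0]]\<close> and \<open>\<xi>*A*\<close> to \<open>[[0,1/s],[s,0]]\<close>. The only constraint that
  remains is \<open>s\<^sup>2 \<noteq> 1\<close>, which amounts to \<open>ad \<noteq> bc\<close>, i.e. \<open>A*\<close> is not a scalar multiple
  of \<open>A\<close>; this holds for every Leonard pair, because a basis diagonalising \<open>A\<close> would
  then diagonalise \<open>A*\<close> as well.\<close>

lemma sum_atLeastLessThan_2: "(\<Sum>i\<in>{0..<2::nat}. f i) = f 0 + f 1"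
  by (simp add: numeral_2_eq_2)

lemma leonard_pair_not_smult:
  assumes "leonard_pair n A As" and "2 \<le> n"
  shows "As \<noteq> k \<cdot>\<^sub>m A"
proof
  assume As: "As = k \<cdot>\<^sub>m A"
  from assms(1) obtain Q Qi where Q: "Q \<in> carrier_mat n n" "Qi \<in> carrier_mat n n"
    and tri: "irred_tridiagonal (Qi * As * Q)" and diag: "diagonal_mat (Qi * A * Q)"
    and A: "A \<in> carrier_mat n n"
    unfolding leonard_pair_def by blast
  have "Qi * As * Q = k \<cdot>\<^sub>m (Qi * A * Q)"
    using Q A unfolding As by (metis mult_smult_assoc_mat mult_smult_distrib mult_carrier_mat)
  moreover have "(Qi * A * Q) $$ (0, 1) = 0"
    using diag Q A assms(2) unfolding diagonal_mat_def by auto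
  moreover have "(Qi * As * Q) $$ (0, Suc 0) \<noteq> 0"
    using tri Q A As assms(2) unfolding irred_tridiagonal_def by auto
  ultimately show False
    using Q A assms(2) by auto
qed

lemma zero_diagonal_2_eq:
  assumes "M \<in> carrier_mat 2 2" and "M $$ (0,0) = 0" and "M $$ (1,1) = 0"
  shows "M = mat_of_rows_list 2 [[0, M $$ (0,1)], [M $$ (1,0), 0]]"
  by (rule eq_matI) (use assms in \<open>auto simp: mat_of_rows_list_def less_Suc_eq numeral_2_eq_2\<close>)

lemma leonard_pair_zero_diagonal_2_det:
  fixes a b c d :: "'a::field"
  assumes "leonard_pair 2 (mat_of_rows_list 2 [[0, a], [b, 0]]) (mat_of_rows_list 2 [[0, c], [d, 0]])"
    and "a \<noteq> 0"
  shows "a * d \<noteq> b * c"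
proof
  assume "a * d = b * c"
  then have "mat_of_rows_list 2 [[0, c], [d, 0]] = (c / a) \<cdot>\<^sub>m mat_of_rows_list 2 [[0, a], [b, 0]]"
    using \<open>a \<noteq> 0\<close> by (intro eq_matI) (auto simp: mat_of_rows_list_def less_Suc_eq numeral_2_eq_2 field_simps)
  with leonard_pair_not_smult[OF assms(1) order_refl] show False
    by blast
qed

definition diag_1t :: "'a::field \<Rightarrow> 'a mat" where
  "diag_1t t = mat 2 2 (\<lambda>(i,j). if i = j then (if i = 0 then 1 else t) else 0)"

lemma diag_1t_carrier: "diag_1t t \<in> carrier_mat 2 2"
  by (simp add: diag_1t_def)

lemma diagonal_mat_diag_1t: "diagonal_mat (diag_1t t)"
  by (auto simp: diagonal_mat_def diag_1t_def)

lemma diag_1t_mult: "diag_1t s * diag_1t t = diag_1t (s * t)"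
  by (rule eq_matI) (auto simp: diag_1t_def less_Suc_eq numeral_2_eq_2 scalar_prod_def sum_atLeastLessThan_2)

lemma diag_1t_1: "diag_1t 1 = 1\<^sub>m 2"
  by (rule eq_matI) (auto simp: diag_1t_def less_Suc_eq numeral_2_eq_2)

lemma inverts_mat_diag_1t:
  assumes "t \<noteq> 0"
  shows "inverts_mat (diag_1t t) (diag_1t (inverse t))"
  using assms by (simp add: inverts_mat_def diag_1t_mult diag_1t_1 carrier_matD[OF diag_1t_carrier])

lemma diag_1t_conj_antidiagonal:
  fixes x y t :: "'a::field"
  assumes "t \<noteq> 0"
  shows "diag_1t (inverse t) * mat_of_rows_list 2 [[0, x], [y, 0]] * diag_1t t
       = mat_of_rows_list 2 [[0, x * t], [y / t, 0]]"
  by (rule eq_matI)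
    (use assms in \<open>auto simp: diag_1t_def mat_of_rows_list_def less_Suc_eq numeral_2_eq_2 scalar_prod_def
       sum_atLeastLessThan_2 field_simps\<close>)

lemma smult_antidiagonal:
  "k \<cdot>\<^sub>m mat_of_rows_list 2 [[0, x], [y, 0]] = mat_of_rows_list 2 [[0, k * x], [k * y, 0::'a::field]]"
  by (rule eq_matI) (auto simp: mat_of_rows_list_def less_Suc_eq numeral_2_eq_2)

lemma square_root_exists: "\<exists>y::'a::alg_closed_field. y ^ 2 = x"
  by (rule nth_root_exists) simp

lemma antidiagonal_normalisation_scalars:
  fixes a b c d :: "'a::alg_closed_field"
  assumes "a \<noteq> 0" "b \<noteq> 0" "c \<noteq> 0" "d \<noteq> 0" and "a * d \<noteq> b * c"
  obtains \<xi> \<xi>s s t where "\<xi> \<noteq> 0" "\<xi>s \<noteq> 0" "s \<noteq> 0" "s ^ 2 \<noteq> 1" "t \<noteq> 0"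
    "\<xi> * a * t = 1" "\<xi> * b / t = 1" "\<xi>s * c * t = inverse s" "\<xi>s * d / t = s"
proof -
  obtain \<xi> where "\<xi> ^ 2 = inverse (a * b)"
    using square_root_exists by blast
  then have \<xi>: "\<xi> * \<xi> * a * b = 1"
    using assms(1,2) by (simp add: power2_eq_square field_simps)
  obtain \<xi>s where "\<xi>s ^ 2 = inverse (c * d)"
    using square_root_exists by blast
  then have \<xi>s: "\<xi>s * \<xi>s * c * d = 1"
    using assms(3,4) by (simp add: power2_eq_square field_simps)
  define t where "t = \<xi> * b"
  define s where "s = \<xi>s * d / t"
  have nz: "\<xi> \<noteq> 0" "\<xi>s \<noteq> 0" "t \<noteq> 0" "s \<noteq> 0"
    using \<xi> \<xi>s assms(2,4) by (auto simp: t_def s_def)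
  have "s ^ 2 \<noteq> 1"
  proof
    assume "s ^ 2 = 1"
    then have "\<xi>s * \<xi>s * d * d * (c * a) = \<xi> * \<xi> * b * b * (c * a)"
      using nz by (simp add: s_def t_def power2_eq_square field_simps)
    then have "(\<xi>s * \<xi>s * c * d) * (a * d) = (\<xi> * \<xi> * a * b) * (b * c)"
      by (simp add: algebra_simps)
    with \<xi> \<xi>s assms(5) show False
      by simp
  qed
  moreover have "\<xi> * a * t = 1" "\<xi> * b / t = 1" "\<xi>s * c * t = inverse s" "\<xi>s * d / t = s"
    using \<xi> \<xi>s nz by (auto simp: t_def s_def field_simps)
  ultimately show thesis
    using that nz by blast
qed

theorem proposition4p3:
  fixes A As :: "'a::alg_closed_field mat"
  assumes "A \<in> carrier_mat 2 2" and "As \<in> carrier_mat 2 2"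
    and "A $$ (0,0) = 0" and "A $$ (1,1) = 0" and "A $$ (0,1) \<noteq> 0" and "A $$ (1,0) \<noteq> 0"
    and "As $$ (0,0) = 0" and "As $$ (1,1) = 0" and "As $$ (0,1) \<noteq> 0" and "As $$ (1,0) \<noteq> 0"
    and "leonard_pair 2 A As"
  shows "\<exists>\<xi> \<xi>s s D Di. \<xi> \<noteq> 0 \<and> \<xi>s \<noteq> 0 \<and> s \<noteq> 0 \<and> s ^ 2 \<noteq> 1 \<and>
           D \<in> carrier_mat 2 2 \<and> Di \<in> carrier_mat 2 2 \<and> diagonal_mat D \<and>
           inverts_mat D Di \<and> inverts_mat Di D \<and>
           Di * (\<xi> \<cdot>\<^sub>m A) * D = mat_of_rows_list 2 [[0, 1], [1, 0]] \<and>
           Di * (\<xi>s \<cdot>\<^sub>m As) * D = mat_of_rows_list 2 [[0, inverse s], [s, 0]]"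
proof -
  have A: "A = mat_of_rows_list 2 [[0, A $$ (0,1)], [A $$ (1,0), 0]]"
    using assms(1,3,4) by (rule zero_diagonal_2_eq)
  have As: "As = mat_of_rows_list 2 [[0, As $$ (0,1)], [As $$ (1,0), 0]]"
    using assms(2,7,8) by (rule zero_diagonal_2_eq)
  have "leonard_pair 2 (mat_of_rows_list 2 [[0, A $$ (0,1)], [A $$ (1,0), 0]])
      (mat_of_rows_list 2 [[0, As $$ (0,1)], [As $$ (1,0), 0]])"
    using assms(11) by (simp only: A[symmetric] As[symmetric])
  from leonard_pair_zero_diagonal_2_det[OF this assms(5)]
  obtain \<xi> \<xi>s s t where nz: "\<xi> \<noteq> 0" "\<xi>s \<noteq> 0" "s \<noteq> 0" "s ^ 2 \<noteq> 1" "t \<noteq> 0"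
    and entries: "\<xi> * A $$ (0,1) * t = 1" "\<xi> * A $$ (1,0) / t = 1"
      "\<xi>s * As $$ (0,1) * t = inverse s" "\<xi>s * As $$ (1,0) / t = s"
    using antidiagonal_normalisation_scalars assms(5,6,9,10) by metis
  have "diag_1t (inverse t) * (\<xi> \<cdot>\<^sub>m A) * diag_1t t = mat_of_rows_list 2 [[0, 1], [1, 0]]"
    by (subst A) (simp only: smult_antidiagonal diag_1t_conj_antidiagonal[OF nz(5)] entries)
  moreover have "diag_1t (inverse t) * (\<xi>s \<cdot>\<^sub>m As) * diag_1t t
      = mat_of_rows_list 2 [[0, inverse s], [s, 0]]"
    by (subst As) (simp only: smult_antidiagonal diag_1t_conj_antidiagonal[OF nz(5)] entries)
  moreover have "inverts_mat (diag_1t t) (diag_1t (inverse t))"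
    "inverts_mat (diag_1t (inverse t)) (diag_1t t)"
    using inverts_mat_diag_1t[of t] inverts_mat_diag_1t[of "inverse t"] nz(5) by simp_all
  ultimately show ?thesis
    using nz diag_1t_carrier diagonal_mat_diag_1t by blast
qed

end
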